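(* Suppose $z\in\mathbb{Z}[i]\setminus\{0\}$ is $2$-powerfully unitarily $t$-perfect in $\mathbb{Z}[i]$ for some integer $t\ge 2$, i.e. $I_2^*(z)=t$. Then we may write $z=(1+i)^{\gamma}x$ with $\gamma$ a nonnegative integer, $x\in\mathbb{Z}[i]$ and $N(x)=x\bar x$ odd. Moreover, $x$ has exactly $\gamma+\upsilon_2(t)$ pairwise nonassociated prime divisors, where $\upsilon_2(t)$ is the exponent of $2$ in $t$.
   Context: Work in the Gaussian integers $\mathbb{Z}[i]=\mathcal O_{\mathbb{Q}(\sqrt{-1})}$, a unique factorization domain. $|z|=\sqrt{z\bar z}$, $\arg(z)\in[0,2\pi)$. Let $A$ be the set of nonzero $z\in\mathbb{Z}[i]$ with $0\le \arg(z)<\pi/2$. Two elements are relatively prime if they have no nonunit common divisor. For nonzero $x,z$, write $x\Diamond z$ iff $x\in A$, $x\mid z$, and $x$ is relatively prime to $z/x$. For $m\in\mathbb{Z}$ define $\delta_m^*(z)=\sum_{x\Diamond z}|x|^m$ and $I_m^*(z)=\delta_m^*(z)/|z|^m$. *)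

theory Defs
  imports "HOL-Analysis.Analysis"
begin

text \<open>Gaussian integers are represented as complex numbers with integer real and imaginary parts.\<close>

definition gint :: "complex \<Rightarrow> bool" where
  "gint z \<longleftrightarrow> Re z \<in> \<int> \<and> Im z \<in> \<int>"

definition gdvd :: "complex \<Rightarrow> complex \<Rightarrow> bool" where
  "gdvd x z \<longleftrightarrow> (\<exists>y. gint y \<and> z = x * y)"

definition gunit :: "complex \<Rightarrow> bool" where
  "gunit u \<longleftrightarrow> gint u \<and> gdvd u 1"

definition gassoc :: "complex \<Rightarrow> complex \<Rightarrow> bool" where
  "gassoc p q \<longleftrightarrow> gdvd p q \<and> gdvd q p"

definition gprime :: "complex \<Rightarrow> bool" where
  "gprime p \<longleftrightarrow> gint p \<and> p \<noteq> 0 \<and> \<not> gunit p \<and>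
     (\<forall>a b. gint a \<and> gint b \<and> gdvd p (a * b) \<longrightarrow> gdvd p a \<or> gdvd p b)"

definition grelprime :: "complex \<Rightarrow> complex \<Rightarrow> bool" where
  "grelprime x y \<longleftrightarrow> (\<forall>d. gint d \<and> gdvd d x \<and> gdvd d y \<longrightarrow> gunit d)"

text \<open>The set A: nonzero Gaussian integers with 0 <= arg z < pi/2. Isabelle's Arg takes values
  in (-pi, pi], which contains [0, pi/2), so this agrees with the convention arg in [0, 2 pi).\<close>
definition gA :: "complex set" where
  "gA = {z. gint z \<and> z \<noteq> 0 \<and> 0 \<le> Arg z \<and> Arg z < pi / 2}"

definition udiv :: "complex \<Rightarrow> complex \<Rightarrow> bool" where
  "udiv x z \<longleftrightarrow> x \<in> gA \<and> gdvd x z \<and> grelprime x (z / x)"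

definition delta_star :: "int \<Rightarrow> complex \<Rightarrow> real" where
  "delta_star m z = (\<Sum>x\<in>{x. udiv x z}. cmod x powi m)"

definition I_star :: "int \<Rightarrow> complex \<Rightarrow> real" where
  "I_star m z = delta_star m z / (cmod z powi m)"

end

theory Submission
  imports Defs "HOL-Computational_Algebra.Primes" "HOL-Computational_Algebra.Euclidean_Algorithm"
begin

text \<open>A unitary divisor of \<open>z\<close> is determined by the set of prime powers \<open>p\<^sup>e\<close>
  exactly dividing \<open>z\<close> that it collects, so \<open>\<delta>\<^sup>*\<^sub>2(z) = \<Prod>(N(p)\<^sup>e + 1)\<close> while
  \<open>|z|\<^sup>2 = N(z) = \<Prod>N(p)\<^sup>e\<close>, and the hypothesis becomes \<open>\<Prod>(N(p)\<^sup>e + 1) = t N(z)\<close>.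
  Write \<open>z = (1 + i)\<^sup>\<gamma> x\<close> with \<open>1 + i\<close> not dividing \<open>x\<close>, i.e. \<open>N(x)\<close> odd, and compare
  \<open>2\<close>-adic valuations. On the right, \<open>N(1 + i) = 2\<close> gives \<open>\<upsilon>\<^sub>2(t) + \<gamma>\<close>. On the left,
  the factor \<open>2\<^sup>\<gamma> + 1\<close> (present if \<open>\<gamma> > 0\<close>) is odd, and every other prime has odd norm,
  hence \<open>N(p) \<equiv> 1 mod 4\<close> as a sum of two squares, so \<open>N(p)\<^sup>e + 1 \<equiv> 2 mod 4\<close>
  contributes exactly one factor \<open>2\<close>: the valuation is the number of prime factors of \<open>x\<close>.\<close>

section \<open>Unitary divisors in factorial semirings\<close>

lemma coprime_iff_multiplicity_disjoint:
  fixes a b :: "'a::factorial_semiring"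
  assumes "a \<noteq> 0" "b \<noteq> 0"
  shows "coprime a b \<longleftrightarrow> (\<forall>p. prime p \<longrightarrow> multiplicity p a = 0 \<or> multiplicity p b = 0)"
proof -
  have "coprime a b \<longleftrightarrow> (\<forall>p. prime p \<longrightarrow> \<not> (p dvd a \<and> p dvd b))"
  proof
    assume "coprime a b"
    then show "\<forall>p. prime p \<longrightarrow> \<not> (p dvd a \<and> p dvd b)"
      using coprime_common_divisor not_prime_unit by blast
  next
    assume no_common: "\<forall>p. prime p \<longrightarrow> \<not> (p dvd a \<and> p dvd b)"
    show "coprime a b"
    proof (rule coprimeI, rule ccontr)
      fix c assume c: "c dvd a" "c dvd b" "\<not> is_unit c"
      then have "c \<noteq> 0" using assms(2) by auto
      with c(3) obtain p where "p dvd c" "prime p" using prime_divisor_exists by blast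
      with c(1,2) no_common show False using dvd_trans by blast
    qed
  qed
  also have "\<dots> \<longleftrightarrow> (\<forall>p. prime p \<longrightarrow> multiplicity p a = 0 \<or> multiplicity p b = 0)"
    using assms by (simp add: prime_multiplicity_gt_zero_iff[symmetric])
  finally show ?thesis .
qed

definition unitary_divisors :: "'a::factorial_semiring \<Rightarrow> 'a set" where
  "unitary_divisors n = {d. normalize d = d \<and> d dvd n \<and> coprime d (n div d)}"

lemma unitary_divisor_iff_multiplicity:
  fixes d n :: "'a::factorial_semiring"
  assumes "n \<noteq> 0" "d dvd n"
  shows "coprime d (n div d) \<longleftrightarrow>
           (\<forall>p. prime p \<longrightarrow> multiplicity p d = 0 \<or> multiplicity p d = multiplicity p n)"
proof -
  have n: "n = d * (n div d)" using assms(2) by simp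
  then have nz: "d \<noteq> 0" "n div d \<noteq> 0" using assms(1) by auto
  have "multiplicity p n = multiplicity p d + multiplicity p (n div d)" if "prime p" for p
    using that nz by (subst n) (simp add: prime_elem_multiplicity_mult_distrib)
  then show ?thesis using coprime_iff_multiplicity_disjoint[OF nz] by auto
qed

definition unitary_part :: "'a::factorial_semiring \<Rightarrow> 'a set \<Rightarrow> 'a" where
  "unitary_part n S = normalize (\<Prod>p\<in>S. p ^ multiplicity p n)"

lemma
  fixes n :: "'a::factorial_semiring"
  assumes "S \<subseteq> prime_factors n"
  shows unitary_part_nonzero: "unitary_part n S \<noteq> 0"
    and multiplicity_unitary_part:
      "prime q \<Longrightarrow> multiplicity q (unitary_part n S) = (if q \<in> S then multiplicity q n else 0)"
proof -
  have S: "finite S" "\<And>p. p \<in> S \<Longrightarrow> prime p"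
    using assms finite_subset by (auto dest: in_prime_factors_imp_prime)
  then show "unitary_part n S \<noteq> 0" by (auto simp: unitary_part_def)
  show "multiplicity q (unitary_part n S) = (if q \<in> S then multiplicity q n else 0)" if "prime q"
    using S that by (simp add: unitary_part_def multiplicity_prod_prime_powers)
qed

lemma prime_factors_unitary_part:
  fixes n :: "'a::factorial_semiring"
  assumes "S \<subseteq> prime_factors n"
  shows "prime_factors (unitary_part n S) = S"
proof -
  have "q \<in> S \<Longrightarrow> prime q \<and> multiplicity q n > 0" for q
    using assms by (auto simp: prime_factors_multiplicity)
  then show ?thesis
    by (auto simp: prime_factors_multiplicity multiplicity_unitary_part[OF assms] split: if_splits)
qed

lemma unitary_part_in_unitary_divisors:
  fixes n :: "'a::factorial_semiring"
  assumes "n \<noteq> 0" "S \<subseteq> prime_factors n"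
  shows "unitary_part n S \<in> unitary_divisors n"
proof -
  have "unitary_part n S dvd n"
    using assms by (intro multiplicity_le_imp_dvd unitary_part_nonzero)
      (auto simp: multiplicity_unitary_part)
  with assms show ?thesis
    by (auto simp: unitary_divisors_def unitary_divisor_iff_multiplicity
        multiplicity_unitary_part) (simp add: unitary_part_def)
qed

lemma unitary_divisor_eq_unitary_part:
  fixes n :: "'a::factorial_semiring"
  assumes "n \<noteq> 0" "d \<in> unitary_divisors n"
  shows "d = unitary_part n (prime_factors d)"
proof -
  from assms have d: "normalize d = d" "d dvd n" "d \<noteq> 0"
    and unitary: "\<And>p. prime p \<Longrightarrow> multiplicity p d = 0 \<or> multiplicity p d = multiplicity p n"
    by (auto simp: unitary_divisors_def unitary_divisor_iff_multiplicity)
  have sub: "prime_factors d \<subseteq> prime_factors n" using assms(1) d(2) by (rule dvd_prime_factors)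
  have "normalize d = normalize (unitary_part n (prime_factors d))"
  proof (rule multiplicity_eq_imp_eq[OF d(3) unitary_part_nonzero[OF sub]])
    fix q :: 'a assume "prime q"
    then show "multiplicity q d = multiplicity q (unitary_part n (prime_factors d))"
      using unitary[of q] d(3) unfolding multiplicity_unitary_part[OF sub \<open>prime q\<close>]
      by (auto simp: prime_factors_multiplicity)
  qed
  then show ?thesis using d(1) by (simp add: unitary_part_def)
qed

lemma unitary_divisors_eq_image:
  fixes n :: "'a::factorial_semiring"
  assumes "n \<noteq> 0"
  shows "unitary_divisors n = unitary_part n ` Pow (prime_factors n)"
proof -
  have "d \<in> unitary_part n ` Pow (prime_factors n)" if "d \<in> unitary_divisors n" for d
  proof (rule image_eqI)
    show "d = unitary_part n (prime_factors d)"
      using assms that by (rule unitary_divisor_eq_unitary_part)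
    show "prime_factors d \<in> Pow (prime_factors n)"
      using assms that by (auto simp: unitary_divisors_def dest: dvd_prime_factors)
  qed
  then show ?thesis using assms unitary_part_in_unitary_divisors by blast
qed

lemma inj_on_unitary_part: "inj_on (unitary_part n) (Pow (prime_factors n))"
  by (rule inj_on_inverseI[of _ prime_factors]) (simp add: prime_factors_unitary_part)

lemma sum_unitary_divisors_multiplicative:
  fixes f :: "'a::factorial_semiring \<Rightarrow> 'b::comm_semiring_1" and n :: 'a
  assumes mult: "\<And>a b. f (a * b) = f a * f b" and units: "\<And>u. is_unit u \<Longrightarrow> f u = 1"
    and "n \<noteq> 0"
  shows "(\<Sum>d\<in>unitary_divisors n. f d) = (\<Prod>p\<in>prime_factors n. f p ^ multiplicity p n + 1)"
proof -
  have f_normalize: "f (normalize x) = f x" for x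
    by (metis mult unit_factor_mult_normalize units unit_factor_is_unit mult_1 normalize_0)
  have f_prod: "f (\<Prod>p\<in>S. p ^ k p) = (\<Prod>p\<in>S. f p ^ k p)" for S and k :: "'a \<Rightarrow> nat"
  proof (induction S rule: infinite_finite_induct)
    case (insert p S)
    have "f (p ^ j) = f p ^ j" for j by (induction j) (simp_all add: mult units)
    with insert show ?case by (simp add: mult)
  qed (simp_all add: units)
  have "(\<Sum>d\<in>unitary_divisors n. f d) = (\<Sum>S\<in>Pow (prime_factors n). f (unitary_part n S))"
    using assms(3) by (simp add: unitary_divisors_eq_image sum.reindex[OF inj_on_unitary_part])
  also have "\<dots> = (\<Sum>S\<in>Pow (prime_factors n).
                    (\<Prod>p\<in>S. f p ^ multiplicity p n) * (\<Prod>p\<in>prime_factors n - S. 1))"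
    by (simp add: unitary_part_def f_normalize f_prod)
  also have "\<dots> = (\<Prod>p\<in>prime_factors n. f p ^ multiplicity p n + 1)"
    by (rule prod_add[symmetric]) simp
  finally show ?thesis .
qed


section \<open>Gaussian integers as a Euclidean ring\<close>

lemma gint_0 [simp]: "gint 0" and gint_1 [simp]: "gint 1" and gint_ii [simp]: "gint \<i>"
  by (simp_all add: gint_def)

lemma gint_add: "gint a \<Longrightarrow> gint b \<Longrightarrow> gint (a + b)"
  and gint_diff: "gint a \<Longrightarrow> gint b \<Longrightarrow> gint (a - b)"
  and gint_uminus: "gint a \<Longrightarrow> gint (- a)"
  and gint_mult: "gint a \<Longrightarrow> gint b \<Longrightarrow> gint (a * b)"
  and gint_cnj: "gint a \<Longrightarrow> gint (cnj a)"
  by (auto simp: gint_def)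

lemma gint_Complex_of_int: "gint (Complex (of_int a) (of_int b))"
  by (simp add: gint_def)

lemma gintE:
  assumes "gint z"
  obtains a b :: int where "z = Complex (of_int a) (of_int b)"
  using assms by (metis Ints_cases complex.collapse gint_def)

typedef gauss = "{z::complex. gint z}" morphisms gc gauss_of
  by (rule exI[of _ 0]) simp

setup_lifting type_definition_gauss

instantiation gauss :: comm_ring_1
begin
lift_definition zero_gauss :: gauss is 0 by simp
lift_definition one_gauss :: gauss is 1 by simp
lift_definition plus_gauss :: "gauss \<Rightarrow> gauss \<Rightarrow> gauss" is "(+)" by (rule gint_add)
lift_definition minus_gauss :: "gauss \<Rightarrow> gauss \<Rightarrow> gauss" is "(-)" by (rule gint_diff)
lift_definition uminus_gauss :: "gauss \<Rightarrow> gauss" is uminus by (rule gint_uminus)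
lift_definition times_gauss :: "gauss \<Rightarrow> gauss \<Rightarrow> gauss" is "(*)" by (rule gint_mult)
instance
  by standard (transfer; simp add: algebra_simps)+
end

instance gauss :: idom
  by standard (transfer; simp)

lift_definition ii :: gauss is \<i> by simp

lemmas gc_simps [simp] = zero_gauss.rep_eq one_gauss.rep_eq plus_gauss.rep_eq
  times_gauss.rep_eq ii.rep_eq

lemma gint_gc [simp]: "gint (gc a)"
  using gc by simp

lemma gc_eq_iff: "gc a = gc b \<longleftrightarrow> a = b"
  by (simp add: gc_inject)

lemma gc_eq_0_iff [simp]: "gc a = 0 \<longleftrightarrow> a = 0"
  by (metis gc_eq_iff zero_gauss.rep_eq)

lemma gc_power: "gc (a ^ n) = gc a ^ n"
  by (induction n) simp_all

lemma gint_imp_gc: "gint z \<Longrightarrow> \<exists>Z. z = gc Z"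
  by (metis gauss_of_inverse mem_Collect_eq)

lemma gc_cases:
  obtains a b :: int where "gc x = Complex (of_int a) (of_int b)"
  using gintE[OF gint_gc] by blast

definition gnorm :: "gauss \<Rightarrow> int" where
  "gnorm x = \<lfloor>Re (gc x)\<rfloor>^2 + \<lfloor>Im (gc x)\<rfloor>^2"

lemma gnorm_Complex: "gc x = Complex (of_int a) (of_int b) \<Longrightarrow> gnorm x = a^2 + b^2"
  by (simp add: gnorm_def)

lemma of_int_gnorm: "real_of_int (gnorm x) = (cmod (gc x))^2"
  by (cases x rule: gc_cases) (simp add: gnorm_Complex cmod_power2)

lemma gc_mult_cnj: "gc x * cnj (gc x) = of_int (gnorm x)"
  by (metis complex_norm_square of_int_gnorm of_real_of_int_eq)

lemma gnorm_mult: "gnorm (a * b) = gnorm a * gnorm b"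
proof -
  have "real_of_int (gnorm (a * b)) = real_of_int (gnorm a * gnorm b)"
    by (simp add: of_int_gnorm norm_mult power_mult_distrib)
  then show ?thesis by linarith
qed

lemma gnorm_0 [simp]: "gnorm 0 = 0" and gnorm_1 [simp]: "gnorm 1 = 1"
  by (simp_all add: gnorm_def)

lemma gnorm_power: "gnorm (a ^ n) = gnorm a ^ n"
  by (induction n) (simp_all add: gnorm_mult del: gc_simps)

lemma gnorm_nonneg: "gnorm x \<ge> 0"
  by (simp add: gnorm_def)

lemma gnorm_eq_0_iff: "gnorm x = 0 \<longleftrightarrow> x = 0"
  by (metis gc_eq_0_iff of_int_0_eq_iff of_int_gnorm norm_eq_zero zero_eq_power2)

lemma int_sum_squares_eq_1_iff:
  "(a::int)^2 + b^2 = 1 \<longleftrightarrow> (a, b) \<in> {(1, 0), (-1, 0), (0, 1), (0, -1)}"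
proof
  assume h: "a^2 + b^2 = 1"
  then have "a^2 \<le> 1" "b^2 \<le> 1" by (smt (verit) zero_le_power2)+
  then have "\<bar>a\<bar> \<le> 1" "\<bar>b\<bar> \<le> 1" by (auto simp: abs_square_le_1)
  then have "a \<in> {-1, 0, 1}" "b \<in> {-1, 0, 1}" by auto
  then show "(a, b) \<in> {(1, 0), (-1, 0), (0, 1), (0, -1)}" using h by auto
qed auto

lemma gnorm_eq_1_iff: "gnorm x = 1 \<longleftrightarrow> gc x \<in> {1, -1, \<i>, -\<i>}"
proof -
  obtain a b :: int where x: "gc x = Complex (of_int a) (of_int b)" by (rule gc_cases)
  have "gc x \<in> {1, -1, \<i>, -\<i>} \<longleftrightarrow> (a, b) \<in> {(1, 0), (-1, 0), (0, 1), (0, -1)}"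
    unfolding x by (auto simp: complex_eq_iff)
  then show ?thesis by (simp add: gnorm_Complex[OF x] int_sum_squares_eq_1_iff)
qed

lemma dvd_1_iff_gnorm_eq_1: "x dvd 1 \<longleftrightarrow> gnorm x = 1"
proof
  assume "x dvd 1"
  then obtain y where "1 = x * y" by (auto elim: dvdE)
  then have "gnorm x * gnorm y = 1" by (metis gnorm_mult gnorm_1)
  then show "gnorm x = 1"
    using pos_zmult_eq_1_iff_lemma[of "gnorm x" "gnorm y"] gnorm_nonneg[of x] by linarith
next
  assume "gnorm x = 1"
  then have "gc (x * gauss_of (cnj (gc x))) = 1"
    by (simp add: gauss_of_inverse gint_cnj gc_mult_cnj)
  then show "x dvd 1" by (metis dvdI gc_eq_iff one_gauss.rep_eq)
qed

lemma dvd_1_gauss_iff: "x dvd 1 \<longleftrightarrow> gc x \<in> {1, -1, \<i>, -\<i>}"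
  by (simp add: dvd_1_iff_gnorm_eq_1 gnorm_eq_1_iff)

text \<open>Division rounds the exact complex quotient to the nearest lattice point; the
  remainder then has at most half the norm of the divisor.\<close>

definition round_complex :: "complex \<Rightarrow> complex" where
  "round_complex z = Complex (of_int (round (Re z))) (of_int (round (Im z)))"

lemma gint_round_complex: "gint (round_complex z)"
  by (simp add: round_complex_def gint_Complex_of_int)

lemma round_complex_gint: "gint z \<Longrightarrow> round_complex z = z"
  by (auto simp: round_complex_def gint_def complex_eq_iff elim!: Ints_cases)

lemma norm_sub_round_complex: "(cmod (z - round_complex z))^2 \<le> 1/2"
proof -
  have "\<bar>Re z - of_int (round (Re z))\<bar> \<le> 1/2" "\<bar>Im z - of_int (round (Im z))\<bar> \<le> 1/2"
    using of_int_round_abs_le[of "Re z"] of_int_round_abs_le[of "Im z"] by linarith+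
  then have "\<bar>Re z - of_int (round (Re z))\<bar>^2 \<le> (1/2)^2" "\<bar>Im z - of_int (round (Im z))\<bar>^2 \<le> (1/2)^2"
    by (intro power_mono; simp)+
  then show ?thesis unfolding cmod_power2 round_complex_def by (simp add: power_divide)
qed

text \<open>The unit factor rotates a nonzero Gaussian integer into the quadrant
  \<open>Re > 0, Im \<ge> 0\<close>; the normalized elements are then exactly those of the set \<open>A\<close>.\<close>

definition quadrant_unit :: "complex \<Rightarrow> complex" where
  "quadrant_unit z = (if z = 0 then 0 else if Re z > 0 \<and> Im z \<ge> 0 then 1
     else if Re z \<le> 0 \<and> Im z > 0 then \<i> else if Re z < 0 \<and> Im z \<le> 0 then -1 else -\<i>)"

lemma gint_quadrant_unit: "gint (quadrant_unit z)"
  by (simp add: quadrant_unit_def gint_def)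

lemma quadrant_unit_in_units: "z \<noteq> 0 \<Longrightarrow> quadrant_unit z \<in> {1, -1, \<i>, -\<i>}"
  by (simp add: quadrant_unit_def)

lemma quadrant_unit_mult_cnj: "z \<noteq> 0 \<Longrightarrow> quadrant_unit z * cnj (quadrant_unit z) = 1"
  by (auto simp: quadrant_unit_def complex_eq_iff)

lemma quadrant_unit_eq_1_iff: "z \<noteq> 0 \<Longrightarrow> quadrant_unit z = 1 \<longleftrightarrow> Re z > 0 \<and> Im z \<ge> 0"
  by (simp add: quadrant_unit_def complex_eq_iff)

lemma quadrant_unit_ii_mult: "quadrant_unit (\<i> * z) = \<i> * quadrant_unit z"
  by (cases z) (auto simp: quadrant_unit_def complex_eq_iff)

lemma quadrant_unit_unit_mult:
  assumes "u \<in> {1, -1, \<i>, -\<i>}"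
  shows "quadrant_unit (u * z) = u * quadrant_unit z"
proof -
  have power_ii: "quadrant_unit (\<i> ^ k * z) = \<i> ^ k * quadrant_unit z" for k
    by (induction k) (simp_all add: quadrant_unit_ii_mult mult.assoc)
  have "u = \<i> ^ 0 \<or> u = \<i> ^ 1 \<or> u = \<i> ^ 2 \<or> u = \<i> ^ 3"
    using assms by (auto simp: numeral_3_eq_3)
  then obtain k where "u = \<i> ^ k" by blast
  then show ?thesis by (simp add: power_ii)
qed

instantiation gauss :: "{normalization_semidom, idom_modulo}"
begin
lift_definition divide_gauss :: "gauss \<Rightarrow> gauss \<Rightarrow> gauss" is "\<lambda>a b. round_complex (a / b)"
  by (rule gint_round_complex)
lift_definition modulo_gauss :: "gauss \<Rightarrow> gauss \<Rightarrow> gauss" is "\<lambda>a b. a - round_complex (a / b) * b"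
  by (intro gint_diff gint_mult gint_round_complex)
lift_definition unit_factor_gauss :: "gauss \<Rightarrow> gauss" is quadrant_unit
  by (rule gint_quadrant_unit)
lift_definition normalize_gauss :: "gauss \<Rightarrow> gauss" is "\<lambda>z. z * cnj (quadrant_unit z)"
  by (intro gint_mult gint_cnj gint_quadrant_unit)
instance
proof
  fix a b :: gauss
  show "b \<noteq> 0 \<Longrightarrow> a * b div b = a"
    by transfer (simp add: round_complex_gint)
  show "a div 0 = 0"
    by transfer (simp add: round_complex_def complex_eq_iff)
  show "a div b * b + a mod b = a"
    by transfer simp
  show "unit_factor 0 = (0::gauss)"
    by transfer (simp add: quadrant_unit_def)
  show "unit_factor a * normalize a = a"
    by transfer (metis mult.left_commute mult_1_right quadrant_unit_mult_cnj mult_zero_left)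
  show "normalize 0 = (0::gauss)"
    by transfer simp
  show "a dvd 1 \<Longrightarrow> unit_factor a = a"
    unfolding dvd_1_gauss_iff by transfer (auto simp: quadrant_unit_def)
  show "a \<noteq> 0 \<Longrightarrow> unit_factor a dvd 1"
    unfolding dvd_1_gauss_iff by transfer (rule quadrant_unit_in_units)
  show "a dvd 1 \<Longrightarrow> unit_factor (a * b) = a * unit_factor b"
    unfolding dvd_1_gauss_iff by transfer (rule quadrant_unit_unit_mult)
qed
end

instantiation gauss :: normalization_euclidean_semiring
begin
definition euclidean_size_gauss :: "gauss \<Rightarrow> nat" where
  "euclidean_size_gauss x = nat (gnorm x)"
instance
proof
  fix a b :: gauss
  show "euclidean_size (0::gauss) = 0"
    by (simp add: euclidean_size_gauss_def gnorm_eq_0_iff)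
  assume b: "b \<noteq> 0"
  then have "gnorm b \<ge> 1" using gnorm_nonneg[of b] gnorm_eq_0_iff[of b] by linarith
  then have "gnorm a \<le> gnorm a * gnorm b"
    using gnorm_nonneg[of a] by (simp add: mult_le_cancel_left1)
  then show "euclidean_size a \<le> euclidean_size (a * b)"
    by (simp add: euclidean_size_gauss_def gnorm_mult)
  define w where "w = gc a / gc b"
  have "gc (a mod b) = (w - round_complex w) * gc b"
    using b by (simp add: modulo_gauss.rep_eq w_def algebra_simps)
  then have "real_of_int (gnorm (a mod b)) = (cmod (w - round_complex w))^2 * (cmod (gc b))^2"
    by (simp add: of_int_gnorm norm_mult power_mult_distrib)
  also have "\<dots> \<le> 1/2 * (cmod (gc b))^2"
    by (rule mult_right_mono[OF norm_sub_round_complex]) simp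
  also have "\<dots> < real_of_int (gnorm b)"
    using b by (simp add: of_int_gnorm)
  finally show "euclidean_size (a mod b) < euclidean_size b"
    using gnorm_nonneg[of "a mod b"] by (simp add: euclidean_size_gauss_def)
qed
end

section \<open>The predicates on complex numbers in terms of the type \<open>gauss\<close>\<close>

lemma gdvd_gc_iff: "gdvd (gc a) (gc b) \<longleftrightarrow> a dvd b"
  unfolding gdvd_def dvd_def by (metis gint_imp_gc gc_eq_iff gint_gc times_gauss.rep_eq)

lemma gunit_gc_iff: "gunit (gc a) \<longleftrightarrow> is_unit a"
  unfolding gunit_def by (metis one_gauss.rep_eq gdvd_gc_iff gint_gc)

lemma gprime_gc_iff: "gprime (gc p) \<longleftrightarrow> prime_elem p"
proof -
  have "(\<forall>a b. gint a \<and> gint b \<and> gdvd (gc p) (a * b) \<longrightarrow> gdvd (gc p) a \<or> gdvd (gc p) b)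
      \<longleftrightarrow> (\<forall>a b. gdvd (gc p) (gc a * gc b) \<longrightarrow> gdvd (gc p) (gc a) \<or> gdvd (gc p) (gc b))"
    using gint_imp_gc by (metis gint_gc)
  also have "\<dots> \<longleftrightarrow> (\<forall>a b. p dvd a * b \<longrightarrow> p dvd a \<or> p dvd b)"
    by (simp add: times_gauss.rep_eq[symmetric] gdvd_gc_iff del: gc_simps)
  finally show ?thesis unfolding gprime_def prime_elem_def by (simp add: gunit_gc_iff)
qed

lemma grelprime_gc_iff: "grelprime (gc a) (gc b) \<longleftrightarrow> coprime a b"
proof -
  have "grelprime (gc a) (gc b) \<longleftrightarrow> (\<forall>d. gdvd (gc d) (gc a) \<and> gdvd (gc d) (gc b) \<longrightarrow> gunit (gc d))"
    unfolding grelprime_def using gint_imp_gc gint_gc by blast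
  then show ?thesis by (auto simp: gdvd_gc_iff gunit_gc_iff coprime_def)
qed

lemma gassoc_class_gc: "{q. gassoc (gc a) q} = gc ` {b. normalize b = normalize a}"
proof (intro set_eqI iffI)
  fix q assume "q \<in> {q. gassoc (gc a) q}"
  then have q: "gdvd (gc a) q" "gdvd q (gc a)" by (auto simp: gassoc_def)
  then obtain b where "q = gc b" using gint_imp_gc gint_mult unfolding gdvd_def by force
  with q show "q \<in> gc ` {b. normalize b = normalize a}"
    by (auto simp: gdvd_gc_iff intro: associatedI)
qed (auto simp: gassoc_def gdvd_gc_iff dest: associatedD1 associatedD2)

lemma Arg_first_quadrant_iff:
  assumes "z \<noteq> 0"
  shows "0 \<le> Arg z \<and> Arg z < pi / 2 \<longleftrightarrow> Re z > 0 \<and> Im z \<ge> 0"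
proof -
  have re: "Re z = norm z * cos (Arg z)"
    by (subst Arg_eq[OF assms]) (simp add: Re_exp Im_exp)
  have nz: "norm z > 0" using assms by simp
  show ?thesis
  proof
    assume a: "0 \<le> Arg z \<and> Arg z < pi / 2"
    then have "cos (Arg z) > 0" by (intro cos_gt_zero_pi) auto
    then show "Re z > 0 \<and> Im z \<ge> 0" using a re nz Arg_less_0 by auto
  next
    assume b: "Re z > 0 \<and> Im z \<ge> 0"
    then have "0 \<le> Arg z" using Arg_less_0 by auto
    moreover have "Arg z < pi / 2"
    proof (rule ccontr)
      assume "\<not> Arg z < pi / 2"
      then have "0 \<le> pi - Arg z" "pi - Arg z \<le> pi / 2" using Arg_le_pi[of z] by auto
      then have "cos (pi - Arg z) \<ge> 0" by (intro cos_ge_zero) auto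
      then have "Re z \<le> 0" using re nz by (simp add: mult_nonneg_nonpos)
      then show False using b by simp
    qed
    ultimately show "0 \<le> Arg z \<and> Arg z < pi / 2" by simp
  qed
qed

lemma normalize_eq_self_iff:
  assumes "a \<noteq> 0"
  shows "normalize a = a \<longleftrightarrow> Re (gc a) > 0 \<and> Im (gc a) \<ge> 0"
proof -
  have "normalize a = a \<longleftrightarrow> gc a * cnj (quadrant_unit (gc a)) = gc a * 1"
    unfolding gc_eq_iff[symmetric] normalize_gauss.rep_eq by (simp only: mult_1_right)
  also have "\<dots> \<longleftrightarrow> cnj (quadrant_unit (gc a)) = 1"
    using assms by (intro mult_left_cancel) simp
  also have "\<dots> \<longleftrightarrow> quadrant_unit (gc a) = 1"
    by (metis complex_cnj_one complex_cnj_cnj)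
  finally show ?thesis
    using assms by (simp add: quadrant_unit_eq_1_iff)
qed

lemma gc_in_gA_iff: "gc a \<in> gA \<longleftrightarrow> a \<noteq> 0 \<and> normalize a = a"
  unfolding gA_def using Arg_first_quadrant_iff[of "gc a"] normalize_eq_self_iff[of a] by auto

lemma gc_div: "b dvd a \<Longrightarrow> b \<noteq> 0 \<Longrightarrow> gc a / gc b = gc (a div b)"
  by (metis dvd_mult_div_cancel gc_eq_0_iff nonzero_mult_div_cancel_left times_gauss.rep_eq)

lemma udiv_gc_iff: "b \<noteq> 0 \<Longrightarrow> udiv (gc a) (gc b) \<longleftrightarrow> a \<in> unitary_divisors b"
  by (auto simp: udiv_def unitary_divisors_def gc_in_gA_iff gdvd_gc_iff grelprime_gc_iff gc_div
      simp del: gc_simps)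

lemma udiv_set_gc: "b \<noteq> 0 \<Longrightarrow> {x. udiv x (gc b)} = gc ` unitary_divisors b"
proof -
  assume "b \<noteq> 0"
  have "udiv x (gc b) \<Longrightarrow> \<exists>a. x = gc a" for x
    by (auto simp: udiv_def gA_def dest: gint_imp_gc)
  then show ?thesis using udiv_gc_iff[OF \<open>b \<noteq> 0\<close>] by blast
qed

lemma card_gassoc_classes_prime_divisors:
  assumes "x \<noteq> 0"
  shows "card ((\<lambda>p. {q. gassoc p q}) ` {p. gprime p \<and> gdvd p (gc x)}) = card (prime_factors x)"
proof -
  define cls where "cls = (\<lambda>n. gc ` {b. normalize b = n})"
  have "gprime p \<Longrightarrow> \<exists>a. p = gc a" for p
    by (auto simp: gprime_def dest: gint_imp_gc)
  then have "{p. gprime p \<and> gdvd p (gc x)} = gc ` {p. prime_elem p \<and> p dvd x}"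
    by (fastforce simp: gprime_gc_iff gdvd_gc_iff)
  then have "(\<lambda>p. {q. gassoc p q}) ` {p. gprime p \<and> gdvd p (gc x)}
      = cls ` normalize ` {p. prime_elem p \<and> p dvd x}"
    by (simp add: image_image gassoc_class_gc cls_def)
  also have "normalize ` {p. prime_elem p \<and> p dvd x} = prime_factors x"
    using assms by (force simp: prime_factors_dvd prime_def)
  finally have classes: "(\<lambda>p. {q. gassoc p q}) ` {p. gprime p \<and> gdvd p (gc x)} = cls ` prime_factors x" .
  have "inj_on cls (prime_factors x)"
  proof (rule inj_onI)
    fix p p' assume "p \<in> prime_factors x" "cls p = cls p'"
    moreover from this have "normalize p = p" by (auto intro: normalize_prime)
    moreover have "gc p \<in> cls p" using \<open>normalize p = p\<close> by (auto simp: cls_def)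
    ultimately have "gc p \<in> cls p'" by simp
    with \<open>normalize p = p\<close> show "p = p'" by (auto simp: cls_def gc_eq_iff)
  qed
  then show ?thesis by (simp add: classes card_image)
qed

section \<open>The prime \<open>1 + i\<close> and the parity of norms\<close>

lemma gnorm_one_plus_ii: "gnorm (1 + ii) = 2"
  by (simp add: gnorm_def)

lemma prime_one_plus_ii: "prime (1 + ii)"
proof -
  have "irreducible (1 + ii)"
  proof (rule irreducibleI)
    show "1 + ii \<noteq> 0" "\<not> is_unit (1 + ii)"
      using gnorm_one_plus_ii by (auto simp: dvd_1_iff_gnorm_eq_1)
    fix a b assume "1 + ii = a * b"
    then have "gnorm a * gnorm b = 2" by (metis gnorm_mult gnorm_one_plus_ii)
    moreover have "x = 1 \<or> y = 1" if "x * y = 2" "x \<ge> 0" for x y :: int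
    proof -
      have "x dvd 2" using that(1) by (metis dvd_triv_left)
      then have "x \<in> {0, 1, 2}" using that(2) zdvd_imp_le[of x 2] by auto
      then show ?thesis using that(1) by auto
    qed
    ultimately have "gnorm a = 1 \<or> gnorm b = 1" using gnorm_nonneg by blast
    then show "is_unit a \<or> is_unit b" by (simp add: dvd_1_iff_gnorm_eq_1)
  qed
  moreover have "normalize (1 + ii) = 1 + ii"
    unfolding gc_eq_iff[symmetric] by (simp add: normalize_gauss.rep_eq quadrant_unit_def)
  ultimately show ?thesis by (simp add: prime_def prime_elem_iff_irreducible)
qed

lemma one_plus_ii_dvd_iff: "1 + ii dvd a \<longleftrightarrow> even (gnorm a)"
proof
  assume "1 + ii dvd a"
  then show "even (gnorm a)" by (auto simp: gnorm_mult gnorm_one_plus_ii)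
next
  assume "even (gnorm a)"
  obtain x y :: int where a: "gc a = Complex (of_int x) (of_int y)" by (rule gc_cases)
  with \<open>even (gnorm a)\<close> have "even (x + y)" by (simp add: gnorm_Complex)
  then obtain k where k: "x + y = 2 * k" by (rule evenE)
  define c where "c = Complex (of_int k) (of_int (y - k))"
  have "gint c" unfolding c_def by (rule gint_Complex_of_int)
  then have "gc (gauss_of c) = c" by (simp add: gauss_of_inverse)
  moreover have "gc a = (1 + \<i>) * c"
    using k by (simp add: a c_def complex_eq_iff)
  ultimately have "a = (1 + ii) * gauss_of c"
    unfolding gc_eq_iff[symmetric] by simp
  then show "1 + ii dvd a" by (rule dvdI)
qed

lemma square_mod_4: "(x::int)^2 mod 4 = (if even x then 0 else 1)"
proof (cases "even x")
  case True
  then obtain k where "x = 2 * k" by (rule evenE)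
  then have "x^2 = 4 * k^2" by (simp add: power_mult_distrib)
  then show ?thesis using True by simp
next
  case False
  then obtain k where "x = 2 * k + 1" by (rule oddE)
  then have "x^2 = 4 * (k^2 + k) + 1" by (simp add: power2_eq_square algebra_simps)
  then show ?thesis using False by presburger
qed

lemma odd_sum_squares_mod_4:
  fixes a b :: int
  assumes "odd (a^2 + b^2)"
  shows "(a^2 + b^2) mod 4 = 1"
proof -
  from assms have "even a \<noteq> even b" by simp
  moreover have "(a^2 + b^2) mod 4 = (a^2 mod 4 + b^2 mod 4) mod 4" by (rule mod_add_eq[symmetric])
  ultimately show ?thesis by (auto simp: square_mod_4)
qed

lemma gnorm_mod_4: "odd (gnorm a) \<Longrightarrow> gnorm a mod 4 = 1"
  unfolding gnorm_def by (rule odd_sum_squares_mod_4)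

lemma multiplicity_two_power_times_odd:
  fixes m :: int
  assumes "odd m"
  shows "multiplicity 2 (2 ^ k * m) = k"
proof (rule multiplicity_decomposeI)
  show "\<not> 2 dvd m" using assms .
qed simp_all

lemma multiplicity_two_gnorm_power_plus_one:
  assumes "prime p" "k > 0"
  shows "multiplicity 2 (gnorm p ^ k + 1) = (if p = 1 + ii then 0 else 1)"
proof (cases "p = 1 + ii")
  case True
  with assms(2) have "odd (gnorm p ^ k + 1)" by (simp add: gnorm_one_plus_ii)
  with True show ?thesis by (simp add: not_dvd_imp_multiplicity_0)
next
  case False
  then have "\<not> 1 + ii dvd p"
    using assms(1) prime_one_plus_ii primes_dvd_imp_eq by blast
  then have "gnorm p mod 4 = 1" by (simp add: one_plus_ii_dvd_iff gnorm_mod_4)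
  moreover have "gnorm p ^ k mod 4 = (gnorm p mod 4) ^ k mod 4" by (rule power_mod[symmetric])
  ultimately have "gnorm p ^ k mod 4 = 1" by simp
  moreover have "n mod 4 = 1 \<Longrightarrow> n + 1 = 2 * ((n + 1) div 2) \<and> odd ((n + 1) div 2)"
    for n :: int by presburger
  ultimately have "gnorm p ^ k + 1 = 2 ^ 1 * ((gnorm p ^ k + 1) div 2)" "odd ((gnorm p ^ k + 1) div 2)"
    by simp_all
  with False show ?thesis by (metis multiplicity_two_power_times_odd)
qed

section \<open>The \<open>2\<close>-adic valuation of \<open>\<delta>\<^sup>*\<^sub>2\<close>\<close>

lemma I_star_2_gc:
  assumes "z \<noteq> 0"
  shows "I_star 2 (gc z) =
    of_int (\<Prod>p\<in>prime_factors z. gnorm p ^ multiplicity p z + 1) / of_int (gnorm z)"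
proof -
  have "delta_star 2 (gc z) = (\<Sum>d\<in>unitary_divisors z. cmod (gc d) powi 2)"
    unfolding delta_star_def udiv_set_gc[OF assms]
    by (rule sum.reindex[unfolded comp_def]) (simp add: inj_on_def gc_eq_iff)
  also have "\<dots> = of_int (\<Sum>d\<in>unitary_divisors z. gnorm d)"
    by (simp add: of_int_gnorm)
  also have "(\<Sum>d\<in>unitary_divisors z. gnorm d) = (\<Prod>p\<in>prime_factors z. gnorm p ^ multiplicity p z + 1)"
    using assms by (intro sum_unitary_divisors_multiplicative) (simp_all add: gnorm_mult dvd_1_iff_gnorm_eq_1)
  finally show ?thesis by (simp add: I_star_def of_int_gnorm)
qed

lemma multiplicity_two_prod_gnorm_power_plus_one:
  "multiplicity 2 (\<Prod>p\<in>prime_factors z. gnorm p ^ multiplicity p z + 1) = card (prime_factors z - {1 + ii})"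
proof -
  have "gnorm p ^ k + 1 \<noteq> 0" for p k
    using zero_le_power[OF gnorm_nonneg, of p k] by linarith
  then have "multiplicity 2 (\<Prod>p\<in>prime_factors z. gnorm p ^ multiplicity p z + 1)
      = (\<Sum>p\<in>prime_factors z. multiplicity 2 (gnorm p ^ multiplicity p z + 1))"
    by (intro prime_elem_multiplicity_prod_distrib) auto
  also have "\<dots> = (\<Sum>p\<in>prime_factors z. if p = 1 + ii then 0 else 1)"
  proof (rule sum.cong[OF refl])
    fix p assume "p \<in> prime_factors z"
    then show "multiplicity 2 (gnorm p ^ multiplicity p z + 1) = (if p = 1 + ii then 0 else 1)"
      by (intro multiplicity_two_gnorm_power_plus_one) (auto simp: prime_factors_multiplicity)
  qed
  also have "\<dots> = card (prime_factors z - {1 + ii})"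
    by (simp add: sum.If_cases Diff_eq)
  finally show ?thesis .
qed

lemma prime_factors_cofactor_one_plus_ii:
  assumes "z = (1 + ii) ^ k * x" "\<not> 1 + ii dvd x" "x \<noteq> 0"
  shows "prime_factors x = prime_factors z - {1 + ii}"
proof -
  have "prime_factors ((1 + ii) ^ k) \<subseteq> {1 + ii}"
    using prime_one_plus_ii by (simp add: prime_factorization_prime_power)
  moreover have "1 + ii \<notin> prime_factors x"
    using assms(2) by (simp add: in_prime_factors_iff)
  ultimately show ?thesis
    using assms prime_one_plus_ii by (auto simp: prime_factors_product)
qed

theorem theorem2p3:
  fixes z :: complex and t :: int
  assumes "gint z" and "z \<noteq> 0" and "t \<ge> 2" and "I_star 2 z = of_int t"
  shows "\<exists>(\<gamma>::nat) x. gint x \<and> z = (1 + \<i>) ^ \<gamma> * x \<and>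
           (\<exists>n::int. odd n \<and> complex_of_int n = x * cnj x) \<and>
           card ((\<lambda>p. {q. gassoc p q}) ` {p. gprime p \<and> gdvd p x}) = \<gamma> + multiplicity 2 t"
proof -
  obtain Z where z: "z = gc Z" using gint_imp_gc assms(1) by blast
  with assms(2) have "Z \<noteq> 0" by simp
  define \<gamma> where "\<gamma> = multiplicity (1 + ii) Z"
  obtain X where Z_eq: "Z = (1 + ii) ^ \<gamma> * X" and not_dvd: "\<not> 1 + ii dvd X"
    unfolding \<gamma>_def using \<open>Z \<noteq> 0\<close> prime_one_plus_ii
    by (metis multiplicity_decompose' not_prime_unit)
  have "X \<noteq> 0" using Z_eq \<open>Z \<noteq> 0\<close> by auto
  have odd_norm: "odd (gnorm X)" using not_dvd by (simp add: one_plus_ii_dvd_iff)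
  have "of_int (\<Prod>p\<in>prime_factors Z. gnorm p ^ multiplicity p Z + 1) = real_of_int (t * gnorm Z)"
    using assms(4) \<open>Z \<noteq> 0\<close> by (simp add: z I_star_2_gc divide_eq_eq gnorm_eq_0_iff)
  then have sigma: "(\<Prod>p\<in>prime_factors Z. gnorm p ^ multiplicity p Z + 1) = t * (2 ^ \<gamma> * gnorm X)"
    by (simp only: of_int_eq_iff) (simp add: Z_eq gnorm_mult gnorm_power gnorm_one_plus_ii)
  have "card (prime_factors X) = multiplicity 2 (\<Prod>p\<in>prime_factors Z. gnorm p ^ multiplicity p Z + 1)"
    by (simp add: multiplicity_two_prod_gnorm_power_plus_one
        prime_factors_cofactor_one_plus_ii[OF Z_eq not_dvd \<open>X \<noteq> 0\<close>])
  also have "\<dots> = multiplicity 2 t + multiplicity 2 (2 ^ \<gamma> * gnorm X)"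
    unfolding sigma using assms(3) odd_norm
    by (intro prime_elem_multiplicity_mult_distrib) auto
  also have "\<dots> = \<gamma> + multiplicity 2 t"
    using odd_norm by (simp add: multiplicity_two_power_times_odd)
  finally have "card (prime_factors X) = \<gamma> + multiplicity 2 t" .
  then show ?thesis
    using z Z_eq odd_norm card_gassoc_classes_prime_divisors[OF \<open>X \<noteq> 0\<close>]
    by (intro exI[of _ \<gamma>] exI[of _ "gc X"]) (auto simp: gc_power gc_mult_cnj)
qed

end
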